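(* Let $A=(a_{i,j})_{i,j=0}^1$ be a $2\times2$ matrix with entries in a commutative ring, and for $n\ge0$ let $A^{\{n\}}=(a^{\{n\}}_{i,j})_{i,j=0}^n$ be its second kind $n$-th Kronecker power. Use the convention that $a^{\{m\}}_{i,j}=0$ whenever an index $i$ or $j$ lies outside $\{0,\dots,m\}$. Then for $n\ge1$ and $0\le j\le n$: Recurrence I: $a^{\{n\}}_{i,j}=a_{0,0}a^{\{n-1\}}_{i,j}+a_{0,1}a^{\{n-1\}}_{i,j-1}$ for $0\le i\le n-1$, and $a^{\{n\}}_{n,j}=a_{1,0}a^{\{n-1\}}_{n-1,j}+a_{1,1}a^{\{n-1\}}_{n-1,j-1}$. Recurrence II: $a^{\{n\}}_{0,j}=a_{0,0}a^{\{n-1\}}_{0,j}+a_{0,1}a^{\{n-1\}}_{0,j-1}$, and $a^{\{n\}}_{i,j}=a_{1,0}a^{\{n-1\}}_{i-1,j}+a_{1,1}a^{\{n-1\}}_{i-1,j-1}$ for $1\le i\le n$. In matrix form, with $L^0_{n-1}=(I_n\mid 0)$ and $L^1_{n-1}=(0\mid I_n)$ the $n\times(n+1)$ matrices obtained by appending a zero column on the right, resp. on the left, of $I_n$: $$A^{\{n\}}=\begin{pmatrix}a_{0,0}I_n\\ (0,\dots,0,a_{1,0})\end{pmatrix}A^{\{n-1\}}L^0_{n-1}+\begin{pmatrix}a_{0,1}I_n\\ (0,\dots,0,a_{1,1})\end{pmatrix}A^{\{n-1\}}L^1_{n-1},$$ $$A^{\{n\}}=\begin{pmatrix}(a_{0,0},0,\dots,0)\\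 a_{1,0}I_n\end{pmatrix}A^{\{n-1\}}L^0_{n-1}+\begin{pmatrix}(a_{0,1},0,\dots,0)\\ a_{1,1}I_n\end{pmatrix}A^{\{n-1\}}L^1_{n-1},$$ where the left factors are $(n+1)\times n$ matrices.
   Context: Second kind Kronecker power: for $A=(a_{i,j})_{i,j=0}^1$ and the linear substitution $z_1=a_{0,0}t_1+a_{0,1}t_2$, $z_2=a_{1,0}t_1+a_{1,1}t_2$, the matrix $A^{\{n\}}=(a^{\{n\}}_{i,j})_{i,j=0}^n$ is defined by $z_1^{n-i}z_2^{i}=\sum_{j=0}^n a^{\{n\}}_{i,j}\,t_1^{n-j}t_2^{j}$ for $0\le i\le n$; $A^{\{0\}}=1$, $A^{\{1\}}=A$. Explicitly $a^{\{n\}}_{i,j}=\sum_{k=0}^j\binom{n-i}{k}\binom{i}{j-k}a_{0,0}^{n-i-k}a_{0,1}^{k}a_{1,0}^{i-j+k}a_{1,1}^{j-k}$, with $\binom{m}{l}=0$ if $m<l$. *)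

theory Defs
  imports Main "Jordan_Normal_Form.Matrix"
begin

text \<open>Entries of the second kind n-th Kronecker power of a 2x2 matrix A, given by the
explicit formula; indices are integers and the entry is 0 whenever an index lies
outside {0..n}.\<close>
definition skp :: "'a::comm_ring_1 mat \<Rightarrow> nat \<Rightarrow> int \<Rightarrow> int \<Rightarrow> 'a" where
  "skp A n i j =
    (if 0 \<le> i \<and> i \<le> int n \<and> 0 \<le> j \<and> j \<le> int n then
       (\<Sum>k = 0..nat j. of_nat ((n - nat i) choose k) * of_nat (nat i choose (nat j - k))
          * A $$ (0,0) ^ (n - nat i - k) * A $$ (0,1) ^ k
          * A $$ (1,0) ^ (nat i + k - nat j) * A $$ (1,1) ^ (nat j - k))
     else 0)"

definition skp_mat :: "'a::comm_ring_1 mat \<Rightarrow> nat \<Rightarrow> 'a mat" where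
  "skp_mat A n = mat (Suc n) (Suc n) (\<lambda>(i,j). skp A n (int i) (int j))"

text \<open>L^0_{n-1} = (I_n | 0) and L^1_{n-1} = (0 | I_n), both n x (n+1).\<close>
definition L0 :: "nat \<Rightarrow> 'a::comm_ring_1 mat" where
  "L0 n = mat n (Suc n) (\<lambda>(i,j). if j = i then 1 else 0)"
definition L1 :: "nat \<Rightarrow> 'a::comm_ring_1 mat" where
  "L1 n = mat n (Suc n) (\<lambda>(i,j). if j = Suc i then 1 else 0)"

definition top_block :: "nat \<Rightarrow> 'a::comm_ring_1 \<Rightarrow> 'a \<Rightarrow> 'a mat" where
  "top_block n c d = mat (Suc n) n
     (\<lambda>(i,j). if i < n then (if i = j then c else 0) else (if Suc j = n then d else 0))"

definition bot_block :: "nat \<Rightarrow> 'a::comm_ring_1 \<Rightarrow> 'a \<Rightarrow> 'a mat" where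
  "bot_block n c d = mat (Suc n) n
     (\<lambda>(i,j). if i = 0 then (if j = 0 then c else 0) else (if i = Suc j then d else 0))"

end

theory Submission
  imports Defs "HOL-Computational_Algebra.Polynomial"
begin

text \<open>Row i of A^{n} is the coefficient sequence of the polynomial
(a00 + a01 X)^(n-i) * (a10 + a11 X)^i. Splitting off one linear factor (the first one if
i < n, the second one if i > 0) and using that multiplication by a + b X maps the
coefficients c_j to a c_j + b c_(j-1) gives both recurrences. The matrix identities are the
recurrences read entrywise: right multiplication by L^0 pads A^{n-1} with a zero column,
right multiplication by L^1 shifts its columns one step to the right.\<close>

lemma skp_eq_0_outside:
  "\<not> (0 \<le> i \<and> i \<le> int n \<and> 0 \<le> j \<and> j \<le> int n) \<Longrightarrow> skp A n i j = 0"
  unfolding skp_def by (rule if_not_P)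

definition coeff_int :: "'a::zero poly \<Rightarrow> int \<Rightarrow> 'a" where
  "coeff_int p j = (if 0 \<le> j then coeff p (nat j) else 0)"

lemma coeff_int_linear_mult:
  "coeff_int ([:a, b:] * p) j = a * coeff_int p j + b * coeff_int p (j - 1)"
  by (auto simp: coeff_int_def coeff_pCons' nat_diff_distrib)

lemma degree_linear_poly_power_le: "degree ([:a, b:] ^ n) \<le> n"
  using degree_power_le[of "[:a, b:]" n] by (simp split: if_splits)

lemma coeff_linear_poly_power':
  fixes a b :: "'a::comm_semiring_1"
  shows "coeff ([:a, b:] ^ n) i = of_nat (n choose i) * b ^ i * a ^ (n - i)"
proof (cases "i \<le> n")
  case False
  then show ?thesis
    using degree_linear_poly_power_le[of a b n] by (simp add: coeff_eq_0 binomial_eq_0)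
qed (rule coeff_linear_poly_power)

text \<open>z1^(n-i) * z2^i dehomogenised by t1 = 1, t2 = X.\<close>
definition skp_row_poly :: "'a::comm_ring_1 mat \<Rightarrow> nat \<Rightarrow> nat \<Rightarrow> 'a poly" where
  "skp_row_poly A n i = [:A $$ (0,0), A $$ (0,1):] ^ (n - i) * [:A $$ (1,0), A $$ (1,1):] ^ i"

lemma degree_skp_row_poly_le:
  assumes "i \<le> n"
  shows "degree (skp_row_poly A n i) \<le> n"
proof -
  have "degree (skp_row_poly A n i) \<le> (n - i) + i"
    unfolding skp_row_poly_def
    using degree_mult_le add_mono[OF degree_linear_poly_power_le degree_linear_poly_power_le]
    by (rule order.trans)
  with assms show ?thesis by simp
qed

lemma coeff_skp_row_poly:
  assumes "i \<le> n"
  shows "coeff (skp_row_poly A n i) j =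
    (\<Sum>k = 0..j. of_nat ((n - i) choose k) * of_nat (i choose (j - k))
       * A $$ (0,0) ^ (n - i - k) * A $$ (0,1) ^ k
       * A $$ (1,0) ^ (i + k - j) * A $$ (1,1) ^ (j - k))"
  unfolding skp_row_poly_def coeff_mult atLeast0AtMost
  by (intro sum.cong refl) (simp add: coeff_linear_poly_power' algebra_simps)

lemma skp_eq_coeff_skp_row_poly:
  assumes "i \<le> n" "j \<le> n"
  shows "skp A n (int i) (int j) = coeff (skp_row_poly A n i) j"
  using assms by (simp only: skp_def coeff_skp_row_poly) simp

lemma skp_eq_coeff_int:
  "skp A n i j = (if 0 \<le> i \<and> i \<le> int n then coeff_int (skp_row_poly A n (nat i)) j else 0)"
proof (cases "0 \<le> i \<and> i \<le> int n \<and> 0 \<le> j")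
  case True
  then have "nat i \<le> n" by (simp add: nat_le_iff)
  show ?thesis
  proof (cases "j \<le> int n")
    case True
    then show ?thesis
      using \<open>0 \<le> i \<and> i \<le> int n \<and> 0 \<le> j\<close> \<open>nat i \<le> n\<close>
        skp_eq_coeff_skp_row_poly[of "nat i" n "nat j" A]
      by (simp add: coeff_int_def)
  next
    case False
    then show ?thesis
      using True degree_skp_row_poly_le[OF \<open>nat i \<le> n\<close>, of A]
      by (simp add: skp_def coeff_int_def coeff_eq_0)
  qed
qed (auto simp: skp_def coeff_int_def)

lemma skp_row_poly_first_factor:
  assumes "i < n"
  shows "skp_row_poly A n i = [:A $$ (0,0), A $$ (0,1):] * skp_row_poly A (n - 1) i"
proof -
  from assms have "n - i = Suc (n - 1 - i)" by simp
  then show ?thesis unfolding skp_row_poly_def by (simp only: power_Suc mult.assoc)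
qed

lemma skp_row_poly_second_factor:
  assumes "0 < i" "i \<le> n"
  shows "skp_row_poly A n i = [:A $$ (1,0), A $$ (1,1):] * skp_row_poly A (n - 1) (i - 1)"
proof -
  obtain i' where i': "i = Suc i'" using assms(1) by (cases i) auto
  with assms have "n - i = n - 1 - i'" by simp
  then show ?thesis unfolding skp_row_poly_def i' by (simp only: power_Suc mult.left_commute diff_Suc_1)
qed

lemma skp_recurrence_first_factor:
  assumes "i < int n"
  shows "skp A n i j = A $$ (0,0) * skp A (n - 1) i j + A $$ (0,1) * skp A (n - 1) i (j - 1)"
proof (cases "0 \<le> i")
  case True
  with assms have "nat i < n" "i \<le> int (n - 1)" by auto
  then show ?thesis
    using True
    by (simp add: skp_eq_coeff_int skp_row_poly_first_factor coeff_int_linear_mult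
        del: mult_pCons_left)
qed (simp add: skp_def)

lemma skp_recurrence_second_factor:
  assumes "0 < i" "0 < n"
  shows "skp A n i j = A $$ (1,0) * skp A (n - 1) (i - 1) j + A $$ (1,1) * skp A (n - 1) (i - 1) (j - 1)"
proof (cases "i \<le> int n")
  case True
  with assms have "0 < nat i" "nat i \<le> n" "nat (i - 1) = nat i - 1" "i - 1 \<le> int (n - 1)" by auto
  then show ?thesis
    using True assms
    by (simp add: skp_eq_coeff_int skp_row_poly_second_factor coeff_int_linear_mult
        del: mult_pCons_left)
qed (use assms in \<open>simp add: skp_def\<close>)

lemma mult_L0:
  assumes "B \<in> carrier_mat m n"
  shows "B * L0 n = mat m (Suc n) (\<lambda>(i,j). if j < n then B $$ (i,j) else 0)"
  using assms by (intro eq_matI) (auto simp: L0_def scalar_prod_def if_distrib cong: if_cong)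

lemma mult_L1:
  assumes "B \<in> carrier_mat m n"
  shows "B * L1 n = mat m (Suc n) (\<lambda>(i,j). if 0 < j then B $$ (i, j - 1) else 0)"
  using assms by (intro eq_matI) (auto simp: L1_def scalar_prod_def gr0_conv_Suc if_distrib cong: if_cong)

lemma top_block_mult:
  assumes "B \<in> carrier_mat n m" "0 < n"
  shows "top_block n c d * B = mat (Suc n) m (\<lambda>(i,j). if i < n then c * B $$ (i,j) else d * B $$ (n - 1, j))"
  using assms
  by (intro eq_matI) (auto simp: top_block_def scalar_prod_def gr0_conv_Suc if_distrib[of "\<lambda>x. x * b" for b] cong: if_cong)

lemma bot_block_mult:
  assumes "B \<in> carrier_mat n m" "0 < n"
  shows "bot_block n c d * B = mat (Suc n) m (\<lambda>(i,j). if i = 0 then c * B $$ (0,j) else d * B $$ (i - 1, j))"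
  using assms
  by (intro eq_matI) (auto simp: bot_block_def scalar_prod_def gr0_conv_Suc if_distrib[of "\<lambda>x. x * b" for b] cong: if_cong)

lemma skp_mat_carrier: "skp_mat A n \<in> carrier_mat (Suc n) (Suc n)"
  by (simp add: skp_mat_def)

lemma skp_mat_mult_L0:
  "skp_mat A n * L0 (Suc n) = mat (Suc n) (Suc (Suc n)) (\<lambda>(i,j). skp A n (int i) (int j))"
  unfolding mult_L0[OF skp_mat_carrier] by (intro eq_matI) (auto simp: skp_mat_def skp_eq_0_outside)

lemma skp_mat_mult_L1:
  "skp_mat A n * L1 (Suc n) = mat (Suc n) (Suc (Suc n)) (\<lambda>(i,j). skp A n (int i) (int j - 1))"
  unfolding mult_L1[OF skp_mat_carrier] by (intro eq_matI) (auto simp: skp_mat_def skp_eq_0_outside of_nat_diff)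

lemma skp_mat_Suc_top_block:
  "skp_mat A (Suc n) =
      top_block (Suc n) (A $$ (0,0)) (A $$ (1,0)) * skp_mat A n * L0 (Suc n)
    + top_block (Suc n) (A $$ (0,1)) (A $$ (1,1)) * skp_mat A n * L1 (Suc n)"
proof -
  have T: "top_block (Suc n) c d \<in> carrier_mat (Suc (Suc n)) (Suc n)" for c d :: 'a
    by (simp add: top_block_def)
  have L: "L0 (Suc n) \<in> carrier_mat (Suc n) (Suc (Suc n))" "L1 (Suc n) \<in> carrier_mat (Suc n) (Suc (Suc n))"
    by (simp_all add: L0_def L1_def)
  show ?thesis
    unfolding assoc_mult_mat[OF T skp_mat_carrier L(1)] assoc_mult_mat[OF T skp_mat_carrier L(2)]
      skp_mat_mult_L0 skp_mat_mult_L1 top_block_mult[OF mat_carrier zero_less_Suc]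
    by (intro eq_matI)
      (auto simp: skp_mat_def skp_recurrence_first_factor[where n = "Suc n"]
        skp_recurrence_second_factor[where n = "Suc n"] not_less_less_Suc_eq)
qed

lemma skp_mat_Suc_bot_block:
  "skp_mat A (Suc n) =
      bot_block (Suc n) (A $$ (0,0)) (A $$ (1,0)) * skp_mat A n * L0 (Suc n)
    + bot_block (Suc n) (A $$ (0,1)) (A $$ (1,1)) * skp_mat A n * L1 (Suc n)"
proof -
  have B: "bot_block (Suc n) c d \<in> carrier_mat (Suc (Suc n)) (Suc n)" for c d :: 'a
    by (simp add: bot_block_def)
  have L: "L0 (Suc n) \<in> carrier_mat (Suc n) (Suc (Suc n))" "L1 (Suc n) \<in> carrier_mat (Suc n) (Suc (Suc n))"
    by (simp_all add: L0_def L1_def)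
  show ?thesis
    unfolding assoc_mult_mat[OF B skp_mat_carrier L(1)] assoc_mult_mat[OF B skp_mat_carrier L(2)]
      skp_mat_mult_L0 skp_mat_mult_L1 bot_block_mult[OF mat_carrier zero_less_Suc]
    by (intro eq_matI)
      (auto simp: skp_mat_def skp_recurrence_first_factor[where n = "Suc n"]
        skp_recurrence_second_factor[where n = "Suc n"] of_nat_diff)
qed

theorem lemma5p1:
  fixes A :: "'a::comm_ring_1 mat" and n :: nat
  assumes "A \<in> carrier_mat 2 2" and "n \<ge> 1"
  shows
   "(\<forall>i j. 0 \<le> i \<and> i \<le> int n - 1 \<and> 0 \<le> j \<and> j \<le> int n \<longrightarrow>
        skp A n i j = A $$ (0,0) * skp A (n-1) i j + A $$ (0,1) * skp A (n-1) i (j-1))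
  \<and> (\<forall>j. 0 \<le> j \<and> j \<le> int n \<longrightarrow>
        skp A n (int n) j = A $$ (1,0) * skp A (n-1) (int n - 1) j
                          + A $$ (1,1) * skp A (n-1) (int n - 1) (j-1))
  \<and> (\<forall>j. 0 \<le> j \<and> j \<le> int n \<longrightarrow>
        skp A n 0 j = A $$ (0,0) * skp A (n-1) 0 j + A $$ (0,1) * skp A (n-1) 0 (j-1))
  \<and> (\<forall>i j. 1 \<le> i \<and> i \<le> int n \<and> 0 \<le> j \<and> j \<le> int n \<longrightarrow>
        skp A n i j = A $$ (1,0) * skp A (n-1) (i-1) j + A $$ (1,1) * skp A (n-1) (i-1) (j-1))
  \<and> skp_mat A n =
      top_block n (A $$ (0,0)) (A $$ (1,0)) * skp_mat A (n-1) * L0 n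
    + top_block n (A $$ (0,1)) (A $$ (1,1)) * skp_mat A (n-1) * L1 n
  \<and> skp_mat A n =
      bot_block n (A $$ (0,0)) (A $$ (1,0)) * skp_mat A (n-1) * L0 n
    + bot_block n (A $$ (0,1)) (A $$ (1,1)) * skp_mat A (n-1) * L1 n"
proof -
  obtain m where n: "n = Suc m"
    using \<open>n \<ge> 1\<close> by (cases n) auto
  show ?thesis
    using skp_recurrence_first_factor[of _ n A] skp_recurrence_second_factor[of _ n A]
      skp_mat_Suc_top_block[of A m] skp_mat_Suc_bot_block[of A m]
    by (auto simp: n)
qed

end
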